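(* Let $\phi:\mathrm{dom}(\phi)\to\mathbb{Z}^n$ be a virtual endomorphism of $\mathbb{Z}^n$ and let $A=\phi\otimes\mathbb{R}:\mathbb{R}^n\to\mathbb{R}^n$ be its unique $\mathbb{R}$-linear extension. Suppose the matrix of $A$ has nonnegative entries. Then the contraction coefficient $\rho(\phi)$ equals the Perron–Frobenius leading eigenvalue (spectral radius) $\lambda(A)$ of $A$.
   Context: A virtual endomorphism of a group $G$ is a homomorphism $\phi:\mathrm{dom}(\phi)\to G$ defined on a finite-index subgroup $\mathrm{dom}(\phi)$. For finitely generated $G$ with word length $|\cdot|$ relative to a finite symmetric generating set, the contraction coefficient is $\rho(\phi)=\limsup_{m\to\infty}\big(\limsup_{g\in\mathrm{dom}(\phi^{\circ m}),|g|\to\infty}|\phi^{\circ m}(g)|/|g|\big)^{1/m}$, where $\phi^{\circ m}$ is the $m$-fold composite on its natural domain; it does not depend on the generating set. *)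

theory Defs
  imports "Jordan_Normal_Form.Spectral_Radius" "HOL-Library.Extended_Real"
begin

definition subgroup_Zn :: "nat \<Rightarrow> int vec set \<Rightarrow> bool" where
  "subgroup_Zn n H \<longleftrightarrow> H \<subseteq> carrier_vec n \<and> 0\<^sub>v n \<in> H \<and>
     (\<forall>x\<in>H. \<forall>y\<in>H. x + y \<in> H) \<and> (\<forall>x\<in>H. - x \<in> H)"

definition finite_index_Zn :: "nat \<Rightarrow> int vec set \<Rightarrow> bool" where
  "finite_index_Zn n H \<longleftrightarrow> subgroup_Zn n H \<and>
     finite ((\<lambda>x. (\<lambda>h. x + h) ` H) ` carrier_vec n)"

definition virtual_endo_Zn :: "nat \<Rightarrow> int vec set \<Rightarrow> (int vec \<Rightarrow> int vec) \<Rightarrow> bool" where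
  "virtual_endo_Zn n H phi \<longleftrightarrow> finite_index_Zn n H \<and>
     (\<forall>x\<in>H. phi x \<in> carrier_vec n) \<and> (\<forall>x\<in>H. \<forall>y\<in>H. phi (x + y) = phi x + phi y)"

definition vsum_list :: "nat \<Rightarrow> int vec list \<Rightarrow> int vec" where
  "vsum_list n xs = foldr (+) xs (0\<^sub>v n)"

definition fin_sym_gen_set :: "nat \<Rightarrow> int vec set \<Rightarrow> bool" where
  "fin_sym_gen_set n S \<longleftrightarrow> finite S \<and> S \<subseteq> carrier_vec n \<and> (\<forall>x\<in>S. - x \<in> S) \<and>
     (\<forall>g\<in>carrier_vec n. \<exists>xs. set xs \<subseteq> S \<and> vsum_list n xs = g)"

definition word_len :: "nat \<Rightarrow> int vec set \<Rightarrow> int vec \<Rightarrow> nat" where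
  "word_len n S g = (LEAST k. \<exists>xs. length xs = k \<and> set xs \<subseteq> S \<and> vsum_list n xs = g)"

primrec iter_map :: "(int vec \<Rightarrow> int vec) \<Rightarrow> nat \<Rightarrow> int vec \<Rightarrow> int vec" where
  "iter_map phi 0 = id"
| "iter_map phi (Suc m) = phi \<circ> iter_map phi m"

primrec iter_dom :: "nat \<Rightarrow> int vec set \<Rightarrow> (int vec \<Rightarrow> int vec) \<Rightarrow> nat \<Rightarrow> int vec set" where
  "iter_dom n H phi 0 = carrier_vec n"
| "iter_dom n H phi (Suc m) = {g \<in> iter_dom n H phi m. iter_map phi m g \<in> H}"

text \<open>Inner limsup: over g in dom(phi^m) with word length tending to infinity.\<close>
definition inner_coeff :: "nat \<Rightarrow> int vec set \<Rightarrow> int vec set \<Rightarrow> (int vec \<Rightarrow> int vec) \<Rightarrow> nat \<Rightarrow> ereal" where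
  "inner_coeff n S H phi m =
     Limsup (inf (principal (iter_dom n H phi m)) (filtercomap (\<lambda>g. real (word_len n S g)) at_top))
       (\<lambda>g. ereal (real (word_len n S (iter_map phi m g)) / real (word_len n S g)))"

definition contraction_coeff :: "nat \<Rightarrow> int vec set \<Rightarrow> int vec set \<Rightarrow> (int vec \<Rightarrow> int vec) \<Rightarrow> ereal" where
  "contraction_coeff n S H phi =
     limsup (\<lambda>m. ereal (real_of_ereal (inner_coeff n S H phi m) powr (1 / real m)))"

end

theory Submission
  imports Defs
begin

(* Let A be the real matrix extending the virtual endomorphism phi of Z^n and write
   t(m) for the sum of the absolute values of the entries of A^m.  The proof compares
   the inner coefficient of phi^m with t(m) up to constants independent of m, and then
   takes m-th roots.
   1. Matrix facts: rho(A)^m <= t(m) for the spectral radius rho(A) (an eigenvector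
      argument), t(m) = O(r^m) for every r > rho(A) (Jordan normal form bounds), and
      A^m maps the all-ones vector to a vector of l1-norm t(m) when A >= 0.
   2. Word length: on Z^n the word length is bi-Lipschitz equivalent to the l1-norm.
   3. Iterates: on its natural domain phi^m agrees with A^m, and this domain contains
      c Z^n for some c > 0, because a finite-index subgroup contains N Z^n.
   4. Consequently alpha t(m) <= inner coefficient <= beta t(m): the upper bound holds
      for every g, the lower bound is attained along multiples of the all-ones vector
      (this is where nonnegativity of A is used).
   5. A root test: a sequence squeezed between a rho^m and K r^m (all r > rho) has
      limsup of m-th roots equal to rho. *)

section \<open>Powers of matrices and the spectral radius\<close>

lemma pow_mat_Suc_left:
  assumes "(A::'a::semiring_1 mat) \<in> carrier_mat n n"
  shows "A ^\<^sub>m (Suc m) = A * A ^\<^sub>m m"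
proof (induct m)
  case 0 then show ?case using assms by simp
next
  case (Suc m)
  have "A ^\<^sub>m Suc (Suc m) = (A * A ^\<^sub>m m) * A" using Suc by simp
  also have "\<dots> = A * (A ^\<^sub>m m * A)" using assms by (simp add: assoc_mult_mat[of _ n n _ n _ n])
  finally show ?case by simp
qed

lemma pow_mat_smult:
  assumes A: "(A :: 'a::comm_ring_1 mat) \<in> carrier_mat n n"
  shows "(k \<cdot>\<^sub>m A) ^\<^sub>m m = k ^ m \<cdot>\<^sub>m (A ^\<^sub>m m)"
proof (induct m)
  case 0 then show ?case using A by (auto intro!: eq_matI)
next
  case (Suc m)
  have "(k \<cdot>\<^sub>m A) ^\<^sub>m Suc m = (k ^ m \<cdot>\<^sub>m (A ^\<^sub>m m)) * (k \<cdot>\<^sub>m A)" using Suc by simp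
  also have "\<dots> = k ^ Suc m \<cdot>\<^sub>m (A ^\<^sub>m Suc m)"
    using A by (simp add: mult_smult_distrib[of _ n n _ n] mult_smult_assoc_mat[of _ n n _ n])
      (intro eq_matI, auto)
  finally show ?case .
qed

lemma mat_vec_index_sum:
  "B \<in> carrier_mat n n \<Longrightarrow> v \<in> carrier_vec n \<Longrightarrow> i < n \<Longrightarrow>
   (B *\<^sub>v v) $ i = (\<Sum>j<n. B $$ (i, j) * v $ j)"
  by (simp add: scalar_prod_def lessThan_atLeast0)

lemma pow_mat_nonneg:
  assumes A: "(A :: 'a::linordered_semidom mat) \<in> carrier_mat n n"
    and nonneg: "\<forall>i<n. \<forall>j<n. A $$ (i, j) \<ge> 0"
  shows "\<forall>i<n. \<forall>j<n. (A ^\<^sub>m m) $$ (i, j) \<ge> 0"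
proof (induct m)
  case 0 then show ?case using A by auto
next
  case (Suc m)
  show ?case
  proof (intro allI impI)
    fix i j assume ij: "i < n" "j < n"
    have "(A ^\<^sub>m Suc m) $$ (i, j) = (\<Sum>k<n. (A ^\<^sub>m m) $$ (i, k) * A $$ (k, j))"
      using A ij by (simp add: scalar_prod_def lessThan_atLeast0)
    also have "\<dots> \<ge> 0" using Suc nonneg ij by (intro sum_nonneg) auto
    finally show "(A ^\<^sub>m Suc m) $$ (i, j) \<ge> 0" .
  qed
qed

lemma l1_mat_vec_le:
  fixes B :: "'a::real_normed_field mat"
  assumes B: "B \<in> carrier_mat n n" and v: "v \<in> carrier_vec n"
  shows "(\<Sum>i<n. norm ((B *\<^sub>v v) $ i)) \<le> (\<Sum>i<n. \<Sum>j<n. norm (B $$ (i, j))) * (\<Sum>j<n. norm (v $ j))"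
proof -
  define V where "V = (\<Sum>j<n. norm (v $ j))"
  have entry: "norm (v $ j) \<le> V" if "j < n" for j
    unfolding V_def using that by (intro member_le_sum) auto
  have "norm ((B *\<^sub>v v) $ i) \<le> (\<Sum>j<n. norm (B $$ (i, j))) * V" if i: "i < n" for i
  proof -
    have "norm ((B *\<^sub>v v) $ i) \<le> (\<Sum>j<n. norm (B $$ (i, j) * v $ j))"
      unfolding mat_vec_index_sum[OF B v i] by (rule norm_sum)
    also have "\<dots> \<le> (\<Sum>j<n. norm (B $$ (i, j)) * V)"
      by (intro sum_mono) (auto simp: norm_mult intro: mult_left_mono entry)
    finally show ?thesis by (simp add: sum_distrib_right)
  qed
  then have "(\<Sum>i<n. norm ((B *\<^sub>v v) $ i)) \<le> (\<Sum>i<n. (\<Sum>j<n. norm (B $$ (i, j))) * V)"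
    by (intro sum_mono) auto
  then show ?thesis unfolding V_def by (simp add: sum_distrib_right)
qed

lemma l1_nonneg_mat_const_vec:
  assumes B: "(B :: real mat) \<in> carrier_mat n n"
    and nonneg: "\<forall>i<n. \<forall>j<n. B $$ (i, j) \<ge> 0" and c: "c \<ge> 0"
  shows "(\<Sum>i<n. \<bar>(B *\<^sub>v vec n (\<lambda>_. c)) $ i\<bar>) = c * (\<Sum>i<n. \<Sum>j<n. \<bar>B $$ (i, j)\<bar>)"
proof -
  have "\<bar>(B *\<^sub>v vec n (\<lambda>_. c)) $ i\<bar> = c * (\<Sum>j<n. \<bar>B $$ (i, j)\<bar>)" if i: "i < n" for i
  proof -
    have "(B *\<^sub>v vec n (\<lambda>_. c)) $ i = c * (\<Sum>j<n. \<bar>B $$ (i, j)\<bar>)"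
      using mat_vec_index_sum[OF B _ i] nonneg i by (simp add: sum_distrib_left algebra_simps)
    then show ?thesis using c by (simp add: sum_nonneg)
  qed
  then show ?thesis by (simp add: sum_distrib_left)
qed

lemma spectral_radius_nonneg:
  assumes "A \<in> carrier_mat n n" and "n > 0"
  shows "spectral_radius A \<ge> 0"
  using spectral_radius_mem_max(1)[OF assms] by auto

lemma spectral_radius_smult_le:
  assumes A: "A \<in> carrier_mat n n" and n: "n > 0" and c: "c > 0"
  shows "spectral_radius (complex_of_real c \<cdot>\<^sub>m A) \<le> c * spectral_radius A"
proof -
  let ?B = "complex_of_real c \<cdot>\<^sub>m A"
  have B: "?B \<in> carrier_mat n n" using A by simp
  obtain mu where mu: "mu \<in> spectrum ?B" "norm mu = spectral_radius ?B"
    using spectral_radius_mem_max(1)[OF B n] by auto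
  then obtain v where v: "v \<in> carrier_vec n" "v \<noteq> 0\<^sub>v n" "?B *\<^sub>v v = mu \<cdot>\<^sub>v v"
    using B unfolding spectrum_def eigenvalue_def eigenvector_def by auto
  have "A *\<^sub>v v = (mu / complex_of_real c) \<cdot>\<^sub>v v"
  proof (rule eq_vecI)
    fix i assume "i < dim_vec ((mu / complex_of_real c) \<cdot>\<^sub>v v)"
    then have i: "i < n" using v by simp
    have "complex_of_real c * (A *\<^sub>v v) $ i = mu * v $ i"
      using arg_cong[OF v(3), of "\<lambda>w. w $ i"] A v(1) i
      by (simp add: mat_vec_index_sum[of _ n] sum_distrib_left algebra_simps)
    then show "(A *\<^sub>v v) $ i = ((mu / complex_of_real c) \<cdot>\<^sub>v v) $ i"
      using c i v(1) by (simp add: field_simps)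
  qed (use A v in simp)
  then have "mu / complex_of_real c \<in> spectrum A"
    using A v unfolding spectrum_def eigenvalue_def eigenvector_def by auto
  moreover have "norm (mu / complex_of_real c) = norm mu / c" using c by (simp add: norm_divide)
  ultimately have "norm mu / c \<le> spectral_radius A"
    using spectral_radius_mem_max(2)[OF A n] by (metis image_eqI)
  then show ?thesis using mu c by (simp add: field_simps)
qed

definition mat_abs_sum :: "nat \<Rightarrow> real mat \<Rightarrow> real" where
  "mat_abs_sum n B = (\<Sum>i<n. \<Sum>j<n. \<bar>B $$ (i, j)\<bar>)"

lemma mat_abs_sum_nonneg: "mat_abs_sum n B \<ge> 0"
  unfolding mat_abs_sum_def by (intro sum_nonneg) auto

text \<open>Lower growth bound: an eigenvector for an eigenvalue of maximal modulus shows
  rho(A)^m <= |A^m|.\<close>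
lemma spectral_radius_pow_le_mat_abs_sum:
  assumes A: "A \<in> carrier_mat n n" and n: "n > 0"
  shows "spectral_radius (map_mat complex_of_real A) ^ m \<le> mat_abs_sum n (A ^\<^sub>m m)"
proof -
  define Ac where "Ac = map_mat complex_of_real A"
  have Ac: "Ac \<in> carrier_mat n n" using A unfolding Ac_def by simp
  obtain lam where lam: "lam \<in> spectrum Ac" "norm lam = spectral_radius Ac"
    using spectral_radius_mem_max(1)[OF Ac n] by auto
  then obtain w where w: "eigenvector Ac w lam" unfolding spectrum_def eigenvalue_def by auto
  have wc: "w \<in> carrier_vec n" and w0: "w \<noteq> 0\<^sub>v n" using w Ac unfolding eigenvector_def by auto
  have pow_eq: "Ac ^\<^sub>m m = map_mat complex_of_real (A ^\<^sub>m m)"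
    unfolding Ac_def by (rule of_real_hom.mat_hom_pow[OF A, symmetric])
  define W where "W = (\<Sum>j<n. norm (w $ j))"
  obtain j where j: "j < n" "w $ j \<noteq> 0" using w0 wc by (metis eq_vecI index_zero_vec(1,2) carrier_vecD)
  have "0 < norm (w $ j)" "norm (w $ j) \<le> W" unfolding W_def using j by (auto intro: member_le_sum)
  then have W: "W > 0" by linarith
  have "norm lam ^ m * W = (\<Sum>i<n. norm ((Ac ^\<^sub>m m *\<^sub>v w) $ i))"
    unfolding eigenvector_pow[OF Ac w] W_def using wc by (simp add: norm_mult norm_power sum_distrib_left)
  also have "\<dots> \<le> (\<Sum>i<n. \<Sum>j<n. norm ((Ac ^\<^sub>m m) $$ (i, j))) * W"
    unfolding W_def by (rule l1_mat_vec_le[OF _ wc]) (use Ac in simp)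
  also have "(\<Sum>i<n. \<Sum>j<n. norm ((Ac ^\<^sub>m m) $$ (i, j))) = mat_abs_sum n (A ^\<^sub>m m)"
    unfolding mat_abs_sum_def pow_eq using A by simp
  finally show ?thesis using W lam(2) unfolding Ac_def by simp
qed

text \<open>Upper growth bound: |A^m| = O(r^m) for every r > rho(A); after rescaling by 1/r this
  is the boundedness of powers of a matrix of spectral radius < 1.\<close>
lemma mat_abs_sum_pow_le:
  assumes A: "A \<in> carrier_mat n n" and n: "n > 0"
    and r: "r > spectral_radius (map_mat complex_of_real A)"
  shows "\<exists>K. \<forall>m. mat_abs_sum n (A ^\<^sub>m m) \<le> K * r ^ m"
proof -
  define Ac where "Ac = map_mat complex_of_real A"
  have Ac: "Ac \<in> carrier_mat n n" using A unfolding Ac_def by simp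
  have r0: "r > 0" using r spectral_radius_nonneg[OF Ac n] unfolding Ac_def by simp
  define B where "B = complex_of_real (1 / r) \<cdot>\<^sub>m Ac"
  have B: "B \<in> carrier_mat n n" using Ac unfolding B_def by simp
  have "spectral_radius B \<le> (1 / r) * spectral_radius Ac"
    unfolding B_def using r0 by (intro spectral_radius_smult_le[OF Ac n]) auto
  also have "\<dots> < 1" using r r0 unfolding Ac_def by (simp add: field_simps)
  finally obtain c where c: "\<forall>k. norm_bound (B ^\<^sub>m k) c"
    using spectral_radius_jnf_norm_bound_less_1_upper_triangular[OF B] by auto
  have entry: "\<bar>(A ^\<^sub>m m) $$ (i, j)\<bar> \<le> c * r ^ m" if ij: "i < n" "j < n" for i j m
  proof -
    have "B ^\<^sub>m m = complex_of_real (1 / r) ^ m \<cdot>\<^sub>m Ac ^\<^sub>m m"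
      unfolding B_def by (rule pow_mat_smult[OF Ac])
    also have "Ac ^\<^sub>m m = map_mat complex_of_real (A ^\<^sub>m m)"
      unfolding Ac_def by (rule of_real_hom.mat_hom_pow[OF A, symmetric])
    finally have "(B ^\<^sub>m m) $$ (i, j) = complex_of_real ((1 / r) ^ m * (A ^\<^sub>m m) $$ (i, j))"
      using ij A by simp
    moreover have "norm ((B ^\<^sub>m m) $$ (i, j)) \<le> c" using c ij B unfolding norm_bound_def by simp
    ultimately have "(1 / r) ^ m * \<bar>(A ^\<^sub>m m) $$ (i, j)\<bar> \<le> c"
      using r0 by (simp add: norm_mult norm_power norm_divide)
    then show ?thesis using r0 by (simp add: field_simps)
  qed
  have "mat_abs_sum n (A ^\<^sub>m m) \<le> (real n * real n * c) * r ^ m" for m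
  proof -
    have "mat_abs_sum n (A ^\<^sub>m m) \<le> (\<Sum>i<n. \<Sum>j<n. c * r ^ m)"
      unfolding mat_abs_sum_def using entry by (intro sum_mono) auto
    then show ?thesis by (simp add: algebra_simps)
  qed
  then show ?thesis by blast
qed


section \<open>Word length is comparable to the l1-norm\<close>

definition int_l1 :: "nat \<Rightarrow> int vec \<Rightarrow> real" where
  "int_l1 n g = (\<Sum>i<n. \<bar>real_of_int (g $ i)\<bar>)"

lemma int_l1_nonneg: "int_l1 n g \<ge> 0"
  unfolding int_l1_def by (auto intro: sum_nonneg)

lemma int_l1_add: "x \<in> carrier_vec n \<Longrightarrow> y \<in> carrier_vec n \<Longrightarrow> int_l1 n (x + y) \<le> int_l1 n x + int_l1 n y"
  unfolding int_l1_def sum.distrib[symmetric] by (intro sum_mono) auto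

lemma int_l1_of_int_vec: "g \<in> carrier_vec n \<Longrightarrow> int_l1 n g = (\<Sum>i<n. \<bar>(map_vec real_of_int g) $ i\<bar>)"
  unfolding int_l1_def by (intro sum.cong) auto

lemma vsum_list_carrier: "set xs \<subseteq> carrier_vec n \<Longrightarrow> vsum_list n xs \<in> carrier_vec n"
  by (induct xs) (auto simp: vsum_list_def)

lemma vsum_list_append:
  "set xs \<subseteq> carrier_vec n \<Longrightarrow> set ys \<subseteq> carrier_vec n \<Longrightarrow>
   vsum_list n (xs @ ys) = vsum_list n xs + vsum_list n ys"
proof (induct xs)
  case Nil then show ?case using vsum_list_carrier[of ys n] by (simp add: vsum_list_def)
next
  case (Cons x xs)
  then have "vsum_list n (xs @ ys) = vsum_list n xs + vsum_list n ys" by auto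
  moreover have "x + (vsum_list n xs + vsum_list n ys) = (x + vsum_list n xs) + vsum_list n ys"
    using Cons(2,3) vsum_list_carrier[of xs n] vsum_list_carrier[of ys n]
    by (intro assoc_add_vec[symmetric]) auto
  ultimately show ?case by (simp add: vsum_list_def)
qed

lemma vsum_list_uminus: "set xs \<subseteq> carrier_vec n \<Longrightarrow> vsum_list n (map uminus xs) = - vsum_list n xs"
proof (induct xs)
  case Nil then show ?case by (auto simp: vsum_list_def intro!: eq_vecI)
next
  case (Cons x xs)
  then show ?case using vsum_list_carrier[of xs n] by (auto simp: vsum_list_def intro!: eq_vecI)
qed

context
  fixes n S assumes gen: "fin_sym_gen_set n S"
begin

lemma gen_carrier: "S \<subseteq> carrier_vec n"
  using gen unfolding fin_sym_gen_set_def by auto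

lemma word_len_witness:
  assumes "g \<in> carrier_vec n"
  shows "\<exists>xs. length xs = word_len n S g \<and> set xs \<subseteq> S \<and> vsum_list n xs = g"
proof -
  obtain xs where "set xs \<subseteq> S \<and> vsum_list n xs = g"
    using gen assms unfolding fin_sym_gen_set_def by blast
  then have "\<exists>k xs. length xs = k \<and> set xs \<subseteq> S \<and> vsum_list n xs = g" by blast
  then show ?thesis unfolding word_len_def by (rule LeastI_ex)
qed

lemma word_len_le: "set xs \<subseteq> S \<Longrightarrow> vsum_list n xs = g \<Longrightarrow> word_len n S g \<le> length xs"
  unfolding word_len_def by (rule Least_le) blast

lemma word_len_zero: "word_len n S (0\<^sub>v n) = 0"
  using word_len_le[of "[]" "0\<^sub>v n"] by (simp add: vsum_list_def)

lemma word_len_add: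
  assumes x: "x \<in> carrier_vec n" and y: "y \<in> carrier_vec n"
  shows "word_len n S (x + y) \<le> word_len n S x + word_len n S y"
proof -
  obtain xs where xs: "length xs = word_len n S x" "set xs \<subseteq> S" "vsum_list n xs = x"
    using word_len_witness[OF x] by blast
  obtain ys where ys: "length ys = word_len n S y" "set ys \<subseteq> S" "vsum_list n ys = y"
    using word_len_witness[OF y] by blast
  have "vsum_list n (xs @ ys) = x + y" using vsum_list_append[of xs n ys] xs ys gen_carrier by auto
  then have "word_len n S (x + y) \<le> length (xs @ ys)" using xs ys by (intro word_len_le) auto
  then show ?thesis using xs ys by simp
qed

lemma word_len_uminus:
  assumes x: "x \<in> carrier_vec n"
  shows "word_len n S (- x) \<le> word_len n S x"
proof -
  obtain xs where xs: "length xs = word_len n S x" "set xs \<subseteq> S" "vsum_list n xs = x"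
    using word_len_witness[OF x] by blast
  have "vsum_list n (map uminus xs) = - x" using vsum_list_uminus[of xs n] xs gen_carrier by auto
  moreover have "set (map uminus xs) \<subseteq> S" using xs gen unfolding fin_sym_gen_set_def by auto
  ultimately have "word_len n S (- x) \<le> length (map uminus xs)" by (intro word_len_le) auto
  then show ?thesis using xs by simp
qed

lemma word_len_nat_smult:
  assumes x: "x \<in> carrier_vec n"
  shows "word_len n S (of_nat k \<cdot>\<^sub>v x) \<le> k * word_len n S x"
proof (induct k)
  case 0
  have "(0::int) \<cdot>\<^sub>v x = 0\<^sub>v n" using x by (intro eq_vecI) auto
  then show ?case using word_len_zero by simp
next
  case (Suc k)
  have "of_nat (Suc k) \<cdot>\<^sub>v x = of_nat k \<cdot>\<^sub>v x + x" using x by (intro eq_vecI) (auto simp: algebra_simps)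
  then have "word_len n S (of_nat (Suc k) \<cdot>\<^sub>v x) \<le> word_len n S (of_nat k \<cdot>\<^sub>v x) + word_len n S x"
    using word_len_add[of "of_nat k \<cdot>\<^sub>v x" x] x by simp
  then show ?case using Suc by simp
qed

lemma word_len_int_smult:
  assumes x: "x \<in> carrier_vec n"
  shows "real (word_len n S (k \<cdot>\<^sub>v x)) \<le> \<bar>real_of_int k\<bar> * real (word_len n S x)"
proof -
  have "word_len n S (k \<cdot>\<^sub>v x) \<le> word_len n S (of_nat (nat \<bar>k\<bar>) \<cdot>\<^sub>v x)"
  proof (cases "k \<ge> 0")
    case False
    then have "k \<cdot>\<^sub>v x = - (of_nat (nat \<bar>k\<bar>) \<cdot>\<^sub>v x)" using x by (intro eq_vecI) auto
    then show ?thesis using word_len_uminus[of "of_nat (nat \<bar>k\<bar>) \<cdot>\<^sub>v x"] x by simp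
  qed simp
  also have "\<dots> \<le> nat \<bar>k\<bar> * word_len n S x" by (rule word_len_nat_smult[OF x])
  finally show ?thesis by (metis of_nat_le_iff of_nat_mult of_nat_nat abs_ge_zero of_int_abs of_int_of_nat_eq)
qed

text \<open>The l1-norm is at most a constant times the word length (a word of length k over S
  sums to a vector of l1-norm at most k times the largest generator).\<close>
lemma int_l1_le_word_len: "\<exists>M>0. \<forall>g\<in>carrier_vec n. int_l1 n g \<le> M * real (word_len n S g)"
proof -
  define M where "M = 1 + (\<Sum>s\<in>S. int_l1 n s)"
  have fin: "finite S" using gen unfolding fin_sym_gen_set_def by auto
  have M0: "M > 0" unfolding M_def by (simp add: add_pos_nonneg sum_nonneg int_l1_nonneg)
  have gen_le: "int_l1 n s \<le> M" if "s \<in> S" for s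
    using member_le_sum[OF that _ fin, of "int_l1 n"] int_l1_nonneg unfolding M_def by force
  have word: "int_l1 n (vsum_list n xs) \<le> real (length xs) * M" if "set xs \<subseteq> S" for xs
    using that
  proof (induct xs)
    case Nil then show ?case by (simp add: vsum_list_def int_l1_def)
  next
    case (Cons x xs)
    have "int_l1 n (vsum_list n (x # xs)) \<le> int_l1 n x + int_l1 n (vsum_list n xs)"
      unfolding vsum_list_def foldr.simps o_def
      using Cons(2) gen_carrier vsum_list_carrier[of xs n] by (intro int_l1_add) (auto simp: vsum_list_def)
    also have "\<dots> \<le> M + real (length xs) * M" using Cons gen_le by (intro add_mono) auto
    finally show ?case by (simp add: algebra_simps)
  qed
  have "int_l1 n g \<le> M * real (word_len n S g)" if "g \<in> carrier_vec n" for g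
    using word_len_witness[OF that] word by (metis mult.commute)
  then show ?thesis using M0 by blast
qed

text \<open>Conversely the word length is at most a constant times the l1-norm: write g as a sum
  of multiples of the unit vectors.\<close>
lemma word_len_le_int_l1: "\<exists>C>0. \<forall>g\<in>carrier_vec n. real (word_len n S g) \<le> C * int_l1 n g"
proof -
  define C where "C = 1 + (\<Sum>i<n. real (word_len n S (unit_vec n i)))"
  have C0: "C > 0" unfolding C_def by (simp add: add_pos_nonneg sum_nonneg)
  have unit_le: "real (word_len n S (unit_vec n i)) \<le> C" if "i < n" for i
    using member_le_sum[of i "{..<n}" "\<lambda>i. real (word_len n S (unit_vec n i))"] that
    unfolding C_def by simp
  have "real (word_len n S g) \<le> C * int_l1 n g" if g: "g \<in> carrier_vec n" for g
  proof -
    define trunc where "trunc j = vec n (\<lambda>i. if i < j then g $ i else 0)" for j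
    have trunc_carrier: "trunc j \<in> carrier_vec n" for j unfolding trunc_def by simp
    have "j \<le> n \<Longrightarrow> real (word_len n S (trunc j)) \<le> C * (\<Sum>i<j. \<bar>real_of_int (g $ i)\<bar>)" for j
    proof (induct j)
      case 0
      have "trunc 0 = 0\<^sub>v n" unfolding trunc_def by (intro eq_vecI) auto
      then show ?case using word_len_zero by simp
    next
      case (Suc j)
      then have j: "j < n" by simp
      have split: "trunc (Suc j) = trunc j + (g $ j) \<cdot>\<^sub>v unit_vec n j"
        unfolding trunc_def using j by (intro eq_vecI) (auto simp: less_Suc_eq)
      have "real (word_len n S ((g $ j) \<cdot>\<^sub>v unit_vec n j)) \<le> \<bar>real_of_int (g $ j)\<bar> * C"
        using word_len_int_smult[of "unit_vec n j" "g $ j"] unit_le[OF j]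
        by (meson abs_ge_zero mult_left_mono order_trans unit_vec_carrier)
      moreover have "real (word_len n S (trunc (Suc j))) \<le>
          real (word_len n S (trunc j)) + real (word_len n S ((g $ j) \<cdot>\<^sub>v unit_vec n j))"
        unfolding split using word_len_add[OF trunc_carrier, of "(g $ j) \<cdot>\<^sub>v unit_vec n j" j] by simp
      ultimately show ?case using Suc j by (simp add: algebra_simps)
    qed
    moreover have "trunc n = g" unfolding trunc_def using g by (intro eq_vecI) auto
    ultimately show ?thesis unfolding int_l1_def by fastforce
  qed
  then show ?thesis using C0 by blast
qed

end

section \<open>Iterates of a virtual endomorphism\<close>

lemma iter_dom_carrier: "iter_dom n H phi m \<subseteq> carrier_vec n"
  by (induct m) auto

lemma iter_map_eq_pow:
  assumes V: "virtual_endo_Zn n H phi" and A: "A \<in> carrier_mat n n"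
    and AH: "\<forall>h\<in>H. A *\<^sub>v map_vec real_of_int h = map_vec real_of_int (phi h)"
    and g: "g \<in> iter_dom n H phi m"
  shows "iter_map phi m g \<in> carrier_vec n \<and>
     map_vec real_of_int (iter_map phi m g) = A ^\<^sub>m m *\<^sub>v map_vec real_of_int g"
  using g
proof (induct m)
  case 0
  then show ?case using A by auto
next
  case (Suc m)
  then have g: "g \<in> iter_dom n H phi m" and h: "iter_map phi m g \<in> H" by auto
  have IH: "map_vec real_of_int (iter_map phi m g) = A ^\<^sub>m m *\<^sub>v map_vec real_of_int g"
    using Suc(1)[OF g] by auto
  have gc: "g \<in> carrier_vec n" using g iter_dom_carrier by blast
  have "map_vec real_of_int (phi (iter_map phi m g)) = A *\<^sub>v (A ^\<^sub>m m *\<^sub>v map_vec real_of_int g)"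
    using AH h IH by metis
  also have "\<dots> = A ^\<^sub>m (Suc m) *\<^sub>v map_vec real_of_int g"
    unfolding pow_mat_Suc_left[OF A] using A gc by (intro assoc_mult_mat_vec[symmetric]) auto
  finally show ?case using V h unfolding virtual_endo_Zn_def by auto
qed

lemma subgroup_nat_smult:
  assumes G: "subgroup_Zn n H" and y: "y \<in> H"
  shows "of_nat k \<cdot>\<^sub>v y \<in> H"
proof (induct k)
  case 0
  have "y \<in> carrier_vec n" using G y unfolding subgroup_Zn_def by auto
  then have "0 \<cdot>\<^sub>v y = 0\<^sub>v n" by (intro eq_vecI) auto
  then show ?case using G unfolding subgroup_Zn_def by auto
next
  case (Suc k)
  have "y \<in> carrier_vec n" using G y unfolding subgroup_Zn_def by auto
  then have "of_nat (Suc k) \<cdot>\<^sub>v y = of_nat k \<cdot>\<^sub>v y + y" by (intro eq_vecI) (auto simp: algebra_simps)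
  then show ?case using G Suc y unfolding subgroup_Zn_def by auto
qed

text \<open>A subgroup of finite index K contains K! Z^n: by pigeonhole two of the cosets
  ky + H, 0 \<le> k \<le> K, coincide, so some (j - i) y with 0 < j - i \<le> K lies in H.\<close>
lemma finite_index_contains_multiples:
  assumes F: "finite_index_Zn n H"
  shows "\<exists>N>0. \<forall>y\<in>carrier_vec n. of_nat N \<cdot>\<^sub>v y \<in> H"
proof -
  define C where "C = (\<lambda>x. (\<lambda>h. x + h) ` H) ` carrier_vec n"
  have G: "subgroup_Zn n H" and fC: "finite C" using F unfolding finite_index_Zn_def C_def by auto
  have HC: "H \<subseteq> carrier_vec n" using G unfolding subgroup_Zn_def by auto
  define K where "K = card C"
  have "of_nat (fact K) \<cdot>\<^sub>v y \<in> H" if y: "y \<in> carrier_vec n" for y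
  proof -
    define coset where "coset k = (\<lambda>h. of_nat k \<cdot>\<^sub>v y + h) ` H" for k :: nat
    have sub: "coset ` {0..K} \<subseteq> C" unfolding coset_def C_def using y by auto
    have "\<not> inj_on coset {0..K}"
    proof
      assume "inj_on coset {0..K}"
      then have "card (coset ` {0..K}) = K + 1" by (simp add: card_image)
      moreover have "card (coset ` {0..K}) \<le> K" using card_mono[OF fC sub] K_def by simp
      ultimately show False by simp
    qed
    then obtain i j where ij: "i \<in> {0..K}" "j \<in> {0..K}" "i < j" "coset i = coset j"
      unfolding inj_on_def by (metis linorder_neqE_nat)
    have "of_nat j \<cdot>\<^sub>v y + 0\<^sub>v n \<in> coset j" unfolding coset_def using G unfolding subgroup_Zn_def by auto
    then have "of_nat j \<cdot>\<^sub>v y + 0\<^sub>v n \<in> coset i" using ij by simp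
    then obtain h where h: "h \<in> H" "of_nat j \<cdot>\<^sub>v y + 0\<^sub>v n = of_nat i \<cdot>\<^sub>v y + h"
      unfolding coset_def by auto
    have hc: "h \<in> carrier_vec n" using h HC by auto
    have "of_nat (j - i) \<cdot>\<^sub>v y = h"
    proof (rule eq_vecI)
      fix l assume l: "l < dim_vec h"
      have "of_nat j * y $ l = of_nat i * y $ l + h $ l"
        using arg_cong[OF h(2), of "\<lambda>v. v $ l"] l hc y by simp
      then show "(of_nat (j - i) \<cdot>\<^sub>v y) $ l = h $ l" using l hc y ij(3)
        by (simp add: of_nat_diff algebra_simps)
    qed (use hc y in auto)
    then have diff: "of_nat (j - i) \<cdot>\<^sub>v y \<in> H" using h by simp
    have "j - i dvd fact K" using ij by (intro dvd_fact) auto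
    then obtain q where q: "fact K = (j - i) * q" by auto
    have "of_nat q \<cdot>\<^sub>v (of_nat (j - i) \<cdot>\<^sub>v y) \<in> H" using subgroup_nat_smult[OF G diff] by simp
    moreover have "of_nat q \<cdot>\<^sub>v (of_nat (j - i) \<cdot>\<^sub>v y) = of_nat (fact K) \<cdot>\<^sub>v y"
      unfolding smult_smult_assoc q of_nat_mult by (simp add: mult.commute)
    ultimately show ?thesis by simp
  qed
  moreover have "fact K > (0::nat)" by simp
  ultimately show ?thesis by blast
qed

text \<open>The natural domain of phi^m contains c Z^n for some c > 0: if c Z^n lies in the domain
  of phi^m and N Z^n in H, then phi^m maps cN Z^n to N Z^n (by linearity) inside H.\<close>
lemma iter_dom_contains_multiples:
  assumes V: "virtual_endo_Zn n H phi" and A: "A \<in> carrier_mat n n"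
    and AH: "\<forall>h\<in>H. A *\<^sub>v map_vec real_of_int h = map_vec real_of_int (phi h)"
  shows "\<exists>c>0. \<forall>x\<in>carrier_vec n. of_nat c \<cdot>\<^sub>v x \<in> iter_dom n H phi m"
proof (induct m)
  case 0
  show ?case by (intro exI[of _ 1]) auto
next
  case (Suc m)
  then obtain c where c: "c > 0" "\<forall>x\<in>carrier_vec n. of_nat c \<cdot>\<^sub>v x \<in> iter_dom n H phi m" by auto
  obtain N where N: "N > 0" "\<forall>y\<in>carrier_vec n. of_nat N \<cdot>\<^sub>v y \<in> H"
    using finite_index_contains_multiples V unfolding virtual_endo_Zn_def by blast
  have "of_nat (c * N) \<cdot>\<^sub>v x \<in> iter_dom n H phi (Suc m)" if x: "x \<in> carrier_vec n" for x
  proof -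
    have reassoc: "of_nat (c * N) \<cdot>\<^sub>v x = of_nat c \<cdot>\<^sub>v (of_nat N \<cdot>\<^sub>v x)"
      by (intro eq_vecI) (auto simp: algebra_simps)
    have dom_cN: "of_nat c \<cdot>\<^sub>v (of_nat N \<cdot>\<^sub>v x) \<in> iter_dom n H phi m"
      and dom_c: "of_nat c \<cdot>\<^sub>v x \<in> iter_dom n H phi m" using c x by auto
    define u where "u = iter_map phi m (of_nat c \<cdot>\<^sub>v x)"
    have u: "u \<in> carrier_vec n" "map_vec real_of_int u = A ^\<^sub>m m *\<^sub>v map_vec real_of_int (of_nat c \<cdot>\<^sub>v x)"
      using iter_map_eq_pow[OF V A AH dom_c] unfolding u_def by auto
    have "map_vec real_of_int (iter_map phi m (of_nat c \<cdot>\<^sub>v (of_nat N \<cdot>\<^sub>v x)))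
        = A ^\<^sub>m m *\<^sub>v map_vec real_of_int (of_nat c \<cdot>\<^sub>v (of_nat N \<cdot>\<^sub>v x))"
      using iter_map_eq_pow[OF V A AH dom_cN] by auto
    also have "map_vec real_of_int (of_nat c \<cdot>\<^sub>v (of_nat N \<cdot>\<^sub>v x)) = real N \<cdot>\<^sub>v map_vec real_of_int (of_nat c \<cdot>\<^sub>v x)"
      by (intro eq_vecI) (auto simp: algebra_simps)
    also have "A ^\<^sub>m m *\<^sub>v (real N \<cdot>\<^sub>v map_vec real_of_int (of_nat c \<cdot>\<^sub>v x))
        = real N \<cdot>\<^sub>v (A ^\<^sub>m m *\<^sub>v map_vec real_of_int (of_nat c \<cdot>\<^sub>v x))"
      using A x by (intro mult_mat_vec[of _ n n]) auto
    also have "\<dots> = map_vec real_of_int (of_nat N \<cdot>\<^sub>v u)"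
      unfolding u(2)[symmetric] by (intro eq_vecI) auto
    finally have "iter_map phi m (of_nat c \<cdot>\<^sub>v (of_nat N \<cdot>\<^sub>v x)) = of_nat N \<cdot>\<^sub>v u"
      by (rule of_int_hom.vec_hom_inj)
    then show ?thesis using N u dom_cN reassoc by simp
  qed
  then show ?case using c N by (intro exI[of _ "c * N"]) auto
qed


section \<open>The inner coefficient is comparable to the growth of A^m\<close>

lemma Limsup_filter_mono: "G \<le> F \<Longrightarrow> Limsup G f \<le> Limsup F f"
  unfolding Limsup_def by (rule INF_superset_mono) (auto simp: le_filter_def)

lemma Limsup_ge_along_sequence:
  assumes lim: "filterlim s F sequentially" and bound: "\<And>k. y \<le> f (s k)"
  shows "y \<le> Limsup F (f :: _ \<Rightarrow> ereal)"
proof -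
  have "y \<le> Limsup sequentially (\<lambda>k. f (s k))"
    using bound by (intro le_Limsup) auto
  also have "\<dots> \<le> Limsup (filtermap s sequentially) f" by (rule Limsup_filtermap_ge)
  also have "\<dots> \<le> Limsup F f" using lim unfolding filterlim_def by (rule Limsup_filter_mono)
  finally show ?thesis .
qed

text \<open>Upper bound, valid for every g: |phi^m g| \<le> C |A^m g|_1 \<le> C |A^m| |g|_1 \<le> C M |A^m| |g|.\<close>
lemma inner_coeff_le:
  assumes V: "virtual_endo_Zn n H phi" and A: "A \<in> carrier_mat n n"
    and AH: "\<forall>h\<in>H. A *\<^sub>v map_vec real_of_int h = map_vec real_of_int (phi h)"
    and M: "\<forall>g\<in>carrier_vec n. int_l1 n g \<le> M * real (word_len n S g)"
    and C: "\<forall>g\<in>carrier_vec n. real (word_len n S g) \<le> C * int_l1 n g" and C0: "C \<ge> 0"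
  shows "inner_coeff n S H phi m \<le> ereal (C * M * mat_abs_sum n (A ^\<^sub>m m))"
  unfolding inner_coeff_def
proof (rule Limsup_bounded)
  let ?wl = "word_len n S" and ?t = "mat_abs_sum n (A ^\<^sub>m m)"
  have "?wl (iter_map phi m g) / ?wl g \<le> C * M * ?t"
    if g: "g \<in> iter_dom n H phi m" and g1: "real (?wl g) \<ge> 1" for g
  proof -
    have gc: "g \<in> carrier_vec n" using g iter_dom_carrier by blast
    define h where "h = iter_map phi m g"
    have h: "h \<in> carrier_vec n" "map_vec real_of_int h = A ^\<^sub>m m *\<^sub>v map_vec real_of_int g"
      using iter_map_eq_pow[OF V A AH g] unfolding h_def by auto
    have "int_l1 n h \<le> ?t * int_l1 n g"
      using l1_mat_vec_le[of "A ^\<^sub>m m" n "map_vec real_of_int g"] A gc h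
      unfolding int_l1_of_int_vec[OF gc] int_l1_of_int_vec[OF h(1)] mat_abs_sum_def by simp
    then have "real (?wl h) \<le> C * (?t * int_l1 n g)"
      using C h(1) C0 by (meson mult_left_mono order_trans)
    also have "\<dots> \<le> C * (?t * (M * real (?wl g)))"
      using M gc C0 mat_abs_sum_nonneg by (intro mult_left_mono) auto
    finally show ?thesis unfolding h_def using g1 by (simp add: divide_le_eq algebra_simps)
  qed
  then show "\<forall>\<^sub>F g in inf (principal (iter_dom n H phi m)) (filtercomap (\<lambda>g. real (?wl g)) at_top).
      ereal (real (?wl (iter_map phi m g)) / real (?wl g)) \<le> ereal (C * M * ?t)"
    by (subst inf_commute, subst eventually_inf_principal)
       (auto simp: eventually_filtercomap_at_top_linorder intro!: exI[of _ 1])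
qed

text \<open>Lower bound on a constant vector g = (z, ..., z) in the domain of phi^m: since A^m \<ge> 0,
  A^m g has l1-norm z |A^m|, while g itself has word length at most C n z.\<close>
lemma word_len_ratio_ge_const_vec:
  assumes n: "n \<ge> 1" and V: "virtual_endo_Zn n H phi" and A: "A \<in> carrier_mat n n"
    and AH: "\<forall>h\<in>H. A *\<^sub>v map_vec real_of_int h = map_vec real_of_int (phi h)"
    and nonneg: "\<forall>i<n. \<forall>j<n. A $$ (i, j) \<ge> 0"
    and M: "\<forall>g\<in>carrier_vec n. int_l1 n g \<le> M * real (word_len n S g)" and M0: "M > 0"
    and C: "\<forall>g\<in>carrier_vec n. real (word_len n S g) \<le> C * int_l1 n g"
    and dom: "vec n (\<lambda>_. z) \<in> iter_dom n H phi m" and z: "z > 0"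
  shows "mat_abs_sum n (A ^\<^sub>m m) / (M * C * real n)
    \<le> real (word_len n S (iter_map phi m (vec n (\<lambda>_. z)))) / real (word_len n S (vec n (\<lambda>_. z)))"
proof -
  let ?wl = "word_len n S" and ?t = "mat_abs_sum n (A ^\<^sub>m m)" and ?g = "vec n (\<lambda>_. z)"
  define h where "h = iter_map phi m ?g"
  have g_l1: "int_l1 n ?g = real n * real_of_int z" unfolding int_l1_def using z by simp
  have "map_vec real_of_int ?g = vec n (\<lambda>_. real_of_int z)" by (intro eq_vecI) auto
  then have h: "h \<in> carrier_vec n" "map_vec real_of_int h = A ^\<^sub>m m *\<^sub>v vec n (\<lambda>_. real_of_int z)"
    using iter_map_eq_pow[OF V A AH dom] unfolding h_def by auto
  have "int_l1 n h = real_of_int z * ?t"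
    using int_l1_of_int_vec[OF h(1)] h(2) l1_nonneg_mat_const_vec[of "A ^\<^sub>m m" n "real_of_int z"]
      pow_mat_nonneg[OF A nonneg] A z unfolding mat_abs_sum_def by simp
  moreover have "int_l1 n h \<le> M * real (?wl h)" using M h(1) by blast
  ultimately have h_wl: "real_of_int z * ?t \<le> M * real (?wl h)" by simp
  have g_wl_le: "real (?wl ?g) \<le> C * (real n * real_of_int z)"
    using C unfolding g_l1[symmetric] by simp
  have "0 < real n * real_of_int z" using n z by simp
  moreover have "real n * real_of_int z \<le> M * real (?wl ?g)" using M unfolding g_l1[symmetric] by simp
  ultimately have "0 < M * real (?wl ?g)" by linarith
  then have g_wl_pos: "real (?wl ?g) > 0" using M0 by (simp add: zero_less_mult_iff)
  have "?t / (M * C * real n) = (real_of_int z * ?t) / (M * (C * (real n * real_of_int z)))"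
    using z by (simp add: field_simps)
  also have "\<dots> \<le> (M * real (?wl h)) / (M * real (?wl ?g))"
    using h_wl g_wl_le g_wl_pos M0 by (intro frac_le) auto
  also have "\<dots> = real (?wl h) / real (?wl ?g)" using M0 by simp
  finally show ?thesis unfolding h_def .
qed

text \<open>Lower bound for the inner coefficient, attained along the constant vectors
  s_k = c (k + 1) (1, ..., 1) in the domain of phi^m, whose word lengths tend to infinity.\<close>
lemma inner_coeff_ge:
  assumes n: "n \<ge> 1" and V: "virtual_endo_Zn n H phi" and A: "A \<in> carrier_mat n n"
    and AH: "\<forall>h\<in>H. A *\<^sub>v map_vec real_of_int h = map_vec real_of_int (phi h)"
    and nonneg: "\<forall>i<n. \<forall>j<n. A $$ (i, j) \<ge> 0"
    and M: "\<forall>g\<in>carrier_vec n. int_l1 n g \<le> M * real (word_len n S g)" and M0: "M > 0"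
    and C: "\<forall>g\<in>carrier_vec n. real (word_len n S g) \<le> C * int_l1 n g"
  shows "ereal (mat_abs_sum n (A ^\<^sub>m m) / (M * C * real n)) \<le> inner_coeff n S H phi m"
proof -
  let ?wl = "word_len n S"
  obtain c where c: "c > 0" "\<forall>x\<in>carrier_vec n. of_nat c \<cdot>\<^sub>v x \<in> iter_dom n H phi m"
    using iter_dom_contains_multiples[OF V A AH] by blast
  define s where "s k = vec n (\<lambda>_. int (c * Suc k))" for k
  have s_dom: "s k \<in> iter_dom n H phi m" for k
  proof -
    have "s k = of_nat c \<cdot>\<^sub>v vec n (\<lambda>_. int (Suc k))" unfolding s_def by (intro eq_vecI) (auto simp: algebra_simps)
    then show ?thesis using c by simp
  qed
  have s_wl: "(real n * real c / M) * real k \<le> real (?wl (s k))" for k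
  proof -
    have "s k \<in> carrier_vec n" unfolding s_def by simp
    then have "int_l1 n (s k) \<le> M * real (?wl (s k))" using M by blast
    moreover have "int_l1 n (s k) = real n * real (c * Suc k)" unfolding s_def int_l1_def by simp
    moreover have "real c * real k \<le> real (c * Suc k)" by (simp add: algebra_simps)
    then have "real n * (real c * real k) \<le> real n * real (c * Suc k)" by (rule mult_left_mono) simp
    ultimately have "real n * (real c * real k) \<le> M * real (?wl (s k))" by linarith
    then show ?thesis using M0 by (simp add: field_simps)
  qed
  have "filterlim (\<lambda>k. (real n * real c / M) * real k) at_top sequentially"
    by (rule filterlim_tendsto_pos_mult_at_top[OF tendsto_const _ filterlim_real_sequentially])
       (use n c M0 in simp)
  then have "filterlim (\<lambda>k. real (?wl (s k))) at_top sequentially"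
    by (rule filterlim_at_top_mono) (use s_wl in auto)
  then have lim: "filterlim s (inf (principal (iter_dom n H phi m)) (filtercomap (\<lambda>g. real (?wl g)) at_top)) sequentially"
    by (auto simp: filterlim_inf filterlim_principal filterlim_filtercomap_iff o_def s_dom)
  have bound: "ereal (mat_abs_sum n (A ^\<^sub>m m) / (M * C * real n))
      \<le> ereal (real (?wl (iter_map phi m (s k))) / real (?wl (s k)))" for k
  proof -
    have "int (c * Suc k) > 0" using c by (simp only: of_nat_0_less_iff nat_0_less_mult_iff) simp
    from word_len_ratio_ge_const_vec[OF n V A AH nonneg M M0 C s_dom[of k, unfolded s_def] this]
    show ?thesis unfolding s_def by simp
  qed
  show ?thesis unfolding inner_coeff_def
    by (rule Limsup_ge_along_sequence[OF lim,
          where f = "\<lambda>g. ereal (real (?wl (iter_map phi m g)) / real (?wl g))"]) (rule bound)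
qed

section \<open>A root test and the main theorem\<close>

lemma powr_root_pow: assumes "(r::real) \<ge> 0" "m \<ge> 1" shows "(r ^ m) powr (1 / real m) = r"
proof (cases "r = 0")
  case True then show ?thesis using assms by simp
next
  case False
  then have "(r ^ m) powr (1 / real m) = (r powr real m) powr (1 / real m)"
    using assms by (simp add: powr_realpow)
  also have "\<dots> = r" using assms by (simp add: powr_powr)
  finally show ?thesis .
qed

lemma tendsto_powr_inverse_mult: assumes "(a::real) > 0"
  shows "((\<lambda>m. a powr (1 / real m) * r) \<longlongrightarrow> r) sequentially"
proof -
  have "((\<lambda>m. a powr (1 / real m) * r) \<longlongrightarrow> a powr 0 * r) sequentially"
    using assms by (intro tendsto_mult tendsto_powr tendsto_const lim_1_over_n) auto
  then show ?thesis using assms by simp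
qed

lemma ereal_le_dense: assumes "\<And>r. rho < r \<Longrightarrow> c \<le> ereal r" shows "c \<le> ereal rho"
proof (rule ccontr)
  assume "\<not> c \<le> ereal rho"
  then obtain z where "ereal rho < ereal z" "ereal z < c" using ereal_dense2 by (metis not_le)
  then show False using assms[of z] by simp
qed

lemma limsup_root_eq:
  fixes x :: "nat \<Rightarrow> real"
  assumes rho: "rho \<ge> 0" and a: "a > 0"
    and lower: "\<And>m. a * rho ^ m \<le> x m"
    and upper: "\<And>r. rho < r \<Longrightarrow> \<exists>K. \<forall>m. x m \<le> K * r ^ m"
  shows "limsup (\<lambda>m. ereal (x m powr (1 / real m))) = ereal rho"
proof (rule antisym)
  have x_nonneg: "x m \<ge> 0" for m
  proof -
    have "0 \<le> a * rho ^ m" using a rho by simp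
    then show ?thesis using lower[of m] by linarith
  qed
  show "limsup (\<lambda>m. ereal (x m powr (1 / real m))) \<le> ereal rho"
  proof (rule ereal_le_dense)
    fix r assume r: "rho < r"
    then have r0: "r > 0" using rho by simp
    obtain K where K: "\<forall>m. x m \<le> K * r ^ m" using upper[OF r] by blast
    define K' where "K' = max K 1"
    have K'0: "K' > 0" unfolding K'_def by simp
    have "\<forall>\<^sub>F m in sequentially. ereal (x m powr (1 / real m)) \<le> ereal (K' powr (1 / real m) * r)"
    proof (rule eventually_mono[OF eventually_ge_at_top[of 1]])
      fix m :: nat assume m: "m \<ge> 1"
      have "x m \<le> K' * r ^ m"
        using K r0 unfolding K'_def by (meson max.cobounded1 mult_right_mono order_trans zero_le_power less_imp_le)
      then have "x m powr (1 / real m) \<le> (K' * r ^ m) powr (1 / real m)"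
        using x_nonneg[of m] by (intro powr_mono2) auto
      also have "\<dots> = K' powr (1 / real m) * r"
        using K'0 r0 m by (simp add: powr_mult powr_root_pow)
      finally show "ereal (x m powr (1 / real m)) \<le> ereal (K' powr (1 / real m) * r)" by simp
    qed
    then have "limsup (\<lambda>m. ereal (x m powr (1 / real m))) \<le> limsup (\<lambda>m. ereal (K' powr (1 / real m) * r))"
      by (rule Limsup_mono)
    also have "\<dots> = ereal r"
      using K'0 by (intro lim_imp_Limsup) (auto simp: tendsto_powr_inverse_mult)
    finally show "limsup (\<lambda>m. ereal (x m powr (1 / real m))) \<le> ereal r" .
  qed
  have "\<forall>\<^sub>F m in sequentially. ereal (a powr (1 / real m) * rho) \<le> ereal (x m powr (1 / real m))"
  proof (rule eventually_mono[OF eventually_ge_at_top[of 1]])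
    fix m :: nat assume m: "m \<ge> 1"
    have "a powr (1 / real m) * rho = (a * rho ^ m) powr (1 / real m)"
      using a rho m by (simp add: powr_mult powr_root_pow)
    also have "\<dots> \<le> x m powr (1 / real m)"
      using lower[of m] a rho by (intro powr_mono2) auto
    finally show "ereal (a powr (1 / real m) * rho) \<le> ereal (x m powr (1 / real m))" by simp
  qed
  then have "limsup (\<lambda>m. ereal (a powr (1 / real m) * rho)) \<le> limsup (\<lambda>m. ereal (x m powr (1 / real m)))"
    by (rule Limsup_mono)
  moreover have "limsup (\<lambda>m. ereal (a powr (1 / real m) * rho)) = ereal rho"
    using a by (intro lim_imp_Limsup) (auto simp: tendsto_powr_inverse_mult)
  ultimately show "ereal rho \<le> limsup (\<lambda>m. ereal (x m powr (1 / real m)))" by simp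
qed

theorem mainTheorem11:
  fixes n :: nat and H :: "int vec set" and phi :: "int vec \<Rightarrow> int vec"
    and A :: "real mat" and S :: "int vec set"
  assumes "n \<ge> 1"
    and "virtual_endo_Zn n H phi"
    and "A \<in> carrier_mat n n"
    and "\<forall>h\<in>H. A *\<^sub>v map_vec real_of_int h = map_vec real_of_int (phi h)"
    and "\<forall>i<n. \<forall>j<n. A $$ (i, j) \<ge> 0"
    and "fin_sym_gen_set n S"
  shows "contraction_coeff n S H phi = ereal (spectral_radius (map_mat complex_of_real A))"
proof -
  note n = assms(1) and V = assms(2) and A = assms(3) and AH = assms(4) and nonneg = assms(5)
  define rho where "rho = spectral_radius (map_mat complex_of_real A)"
  define t where "t m = mat_abs_sum n (A ^\<^sub>m m)" for m
  define x where "x m = real_of_ereal (inner_coeff n S H phi m)" for m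
  obtain M where M0: "M > 0" and M: "\<forall>g\<in>carrier_vec n. int_l1 n g \<le> M * real (word_len n S g)"
    using int_l1_le_word_len[OF assms(6)] by blast
  obtain C where C0: "C > 0" and C: "\<forall>g\<in>carrier_vec n. real (word_len n S g) \<le> C * int_l1 n g"
    using word_len_le_int_l1[OF assms(6)] by blast
  have x_bounds: "t m / (M * C * real n) \<le> x m \<and> x m \<le> C * M * t m" for m
    using inner_coeff_ge[OF n V A AH nonneg M M0 C, of m] inner_coeff_le[OF V A AH M C, of m] C0
    unfolding x_def t_def by (cases "inner_coeff n S H phi m") auto
  have "limsup (\<lambda>m. ereal (x m powr (1 / real m))) = ereal rho"
  proof (rule limsup_root_eq)
    show "rho \<ge> 0" unfolding rho_def using A n by (intro spectral_radius_nonneg[of _ n]) auto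
    show "1 / (M * C * real n) > 0" using M0 C0 n by simp
    show "1 / (M * C * real n) * rho ^ m \<le> x m" for m
    proof -
      have "rho ^ m \<le> t m" using spectral_radius_pow_le_mat_abs_sum[OF A] n unfolding rho_def t_def by simp
      then have "rho ^ m / (M * C * real n) \<le> t m / (M * C * real n)"
        using M0 C0 by (intro divide_right_mono) auto
      then show ?thesis using x_bounds[of m] by simp
    qed
    show "\<exists>K. \<forall>m. x m \<le> K * r ^ m" if "rho < r" for r
    proof -
      obtain K where K: "\<forall>m. t m \<le> K * r ^ m"
        using mat_abs_sum_pow_le[OF A _ \<open>rho < r\<close>[unfolded rho_def]] n unfolding t_def by auto
      have "x m \<le> (C * M * K) * r ^ m" for m
      proof -
        have "C * M * t m \<le> C * M * (K * r ^ m)" using K C0 M0 by (intro mult_left_mono) auto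
        then show ?thesis using x_bounds[of m] by (simp add: mult.assoc)
      qed
      then show ?thesis by blast
    qed
  qed
  then show ?thesis unfolding contraction_coeff_def x_def rho_def .
qed

end
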